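(* Let $n\ge 2$. The function $\mathbf{H}:[0,1]^n\to[0,1]$ has no absorbing element, i.e. there is no $a\in[0,1]$ such that $\mathbf{H}(x_1,\dots,x_{i-1},a,x_{i+1},\dots,x_n)=a$ for every $i$ and all $x_j\in[0,1]$.
   Context: For $\mathbf{x}\in[0,1]^n$ let $x_{(1)}\ge\dots\ge x_{(n)}$ be its entries in decreasing order, and define the median $Med(\mathbf{x})=\frac12(x_{(k)}+x_{(k+1)})$ if $n=2k$ and $Med(\mathbf{x})=x_{(k+1)}$ if $n=2k+1$. Define $f_i(\mathbf{x})=\frac1n$ if $x_1=\dots=x_n$, and otherwise $f_i(\mathbf{x})=\frac{1}{n-1}\Big(1-\frac{|x_i-Med(\mathbf{x})|}{\sum_{j=1}^n|x_j-Med(\mathbf{x})|}\Big)$. Then $\mathbf{H}(\mathbf{x})=\sum_{i=1}^n f_i(\mathbf{x})\,x_i$. *)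

theory Defs
  imports "HOL-Analysis.Analysis"
begin

(* A point x in [0,1]^n is represented as a function x :: nat => real, of which
   only the entries x 0, ..., x (n-1) are relevant (the paper's x_1,...,x_n). *)

definition ord_stat :: "nat \<Rightarrow> (nat \<Rightarrow> real) \<Rightarrow> nat \<Rightarrow> real" where
  "ord_stat n x j = rev (sort (map x [0..<n])) ! (j - 1)"

definition Med :: "nat \<Rightarrow> (nat \<Rightarrow> real) \<Rightarrow> real" where
  "Med n x = (if even n then (ord_stat n x (n div 2) + ord_stat n x (n div 2 + 1)) / 2
              else ord_stat n x (n div 2 + 1))"

definition f_weight :: "nat \<Rightarrow> (nat \<Rightarrow> real) \<Rightarrow> nat \<Rightarrow> real" where
  "f_weight n x i =
     (if (\<forall>j<n. \<forall>k<n. x j = x k) then 1 / real n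
      else 1 / (real n - 1) *
        (1 - \<bar>x i - Med n x\<bar> / (\<Sum>j<n. \<bar>x j - Med n x\<bar>)))"

definition H :: "nat \<Rightarrow> (nat \<Rightarrow> real) \<Rightarrow> real" where
  "H n x = (\<Sum>i<n. f_weight n x i * x i)"

end

theory Submission
  imports Defs
begin

(* The weights f_i sum to 1, so for x = (a, b, ..., b) with b \<noteq> a we get
   H(x) - a = (1 - f_1(x)) (b - a), and a cannot be absorbing unless f_1(x) = 1.
   But f_1(x) \<le> 1/(n-1) < 1 for n \<ge> 3, while for n = 2 the median is the midpoint
   (x_1 + x_2)/2 \<noteq> x_1, which again forces f_1(x) < 1. *)

lemma nonconst_imp_two_le:
  fixes n :: nat
  assumes "\<not> (\<forall>j<n. \<forall>k<n. x j = x k)"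
  shows "n \<ge> 2"
proof (rule ccontr)
  assume "\<not> n \<ge> 2"
  then have "\<forall>j<n. \<forall>k<n. j = k"
    by auto
  with assms show False
    by auto
qed

lemma sum_abs_dev_pos:
  fixes x :: "nat \<Rightarrow> real"
  assumes "\<not> (\<forall>j<n. \<forall>k<n. x j = x k)"
  shows "(\<Sum>j<n. \<bar>x j - c\<bar>) > 0"
proof -
  obtain j where "j < n" "x j \<noteq> c"
    using assms by metis
  then show ?thesis
    by (intro sum_pos2[of _ j]) auto
qed

lemma sum_f_weight:
  assumes "n \<ge> 1"
  shows "(\<Sum>i<n. f_weight n x i) = 1"
proof (cases "\<forall>j<n. \<forall>k<n. x j = x k")
  case True
  then show ?thesis
    unfolding f_weight_def if_P[OF True] using assms by simp
next
  case False
  define S where "S = (\<Sum>j<n. \<bar>x j - Med n x\<bar>)"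
  have "S > 0"
    using sum_abs_dev_pos[OF False] by (simp add: S_def)
  have "n \<ge> 2"
    using nonconst_imp_two_le[OF False] .
  have "(\<Sum>i<n. f_weight n x i) = 1 / (real n - 1) * (\<Sum>i<n. 1 - \<bar>x i - Med n x\<bar> / S)"
    unfolding f_weight_def if_not_P[OF False] by (simp add: S_def sum_distrib_left)
  also have "\<dots> = 1 / (real n - 1) * (real n - S / S)"
    by (simp add: sum_subtractf sum_divide_distrib[symmetric] S_def)
  also have "\<dots> = 1"
    using \<open>S > 0\<close> \<open>n \<ge> 2\<close> by simp
  finally show ?thesis .
qed

lemma H_minus_eq_sum:
  assumes "n \<ge> 1"
  shows "H n x - c = (\<Sum>i<n. f_weight n x i * (x i - c))"
proof -
  have "H n x - c = (\<Sum>i<n. f_weight n x i * x i) - (\<Sum>i<n. f_weight n x i) * c"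
    using sum_f_weight[OF assms] by (simp add: H_def)
  then show ?thesis
    by (simp add: sum_distrib_right sum_subtractf right_diff_distrib)
qed

lemma H_fun_upd_const:
  assumes "n \<ge> 1"
  shows "H n ((\<lambda>_. b)(0 := a)) - a = (1 - f_weight n ((\<lambda>_. b)(0 := a)) 0) * (b - a)"
proof -
  define y where "y = (\<lambda>_::nat. b)(0 := a)"
  have "H n y - a = (\<Sum>i<n. f_weight n y i * (y i - a))"
    using H_minus_eq_sum[OF assms] .
  also have "\<dots> = (\<Sum>i<n. f_weight n y i * (b - a) - (if i = 0 then f_weight n y i * (b - a) else 0))"
    by (rule sum.cong) (auto simp: y_def)
  also have "\<dots> = (\<Sum>i<n. f_weight n y i * (b - a)) - f_weight n y 0 * (b - a)"
    using assms by (simp add: sum_subtractf)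
  also have "\<dots> = (1 - f_weight n y 0) * (b - a)"
    using sum_f_weight[OF assms] by (simp add: sum_distrib_right[symmetric] left_diff_distrib)
  finally show ?thesis
    by (simp add: y_def)
qed

lemma f_weight_le:
  assumes "\<not> (\<forall>j<n. \<forall>k<n. x j = x k)"
  shows "f_weight n x i \<le> 1 / (real n - 1)"
proof -
  have "n \<ge> 2"
    using nonconst_imp_two_le[OF assms] .
  moreover have "\<bar>x i - Med n x\<bar> / (\<Sum>j<n. \<bar>x j - Med n x\<bar>) \<ge> 0"
    by (simp add: sum_nonneg)
  ultimately show ?thesis
    unfolding f_weight_def if_not_P[OF assms] by (intro mult_left_le) auto
qed

lemma Med_two: "Med 2 x = (x 0 + x 1) / 2"
  by (cases "x 0 \<le> x 1") (auto simp: Med_def ord_stat_def upt_rec)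

lemma f_weight_lt_one:
  assumes "n \<ge> 2" and "x 0 \<noteq> x 1"
  shows "f_weight n x 0 < 1"
proof -
  have "0 < n" "1 < n"
    using assms(1) by auto
  then have nonconst: "\<not> (\<forall>j<n. \<forall>k<n. x j = x k)"
    using assms(2) by blast
  show ?thesis
  proof (cases "n = 2")
    case True
    have "\<bar>x 0 - Med 2 x\<bar> > 0"
      using assms(2) by (simp add: Med_two)
    then show ?thesis
      using True nonconst sum_abs_dev_pos[OF nonconst] by (simp add: f_weight_def)
  next
    case False
    then have "1 / (real n - 1) < 1"
      using assms(1) by simp
    then show ?thesis
      using f_weight_le[OF nonconst] by (meson le_less_trans)
  qed
qed

theorem proposition13:
  fixes n :: nat
  assumes "n \<ge> 2"
  shows "\<not> (\<exists>a::real. a \<in> {0..1} \<and>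
            (\<forall>i<n. \<forall>x::nat \<Rightarrow> real. (\<forall>j<n. x j \<in> {0..1}) \<longrightarrow>
               H n (x(i := a)) = a))"
proof
  assume "\<exists>a::real. a \<in> {0..1} \<and>
            (\<forall>i<n. \<forall>x::nat \<Rightarrow> real. (\<forall>j<n. x j \<in> {0..1}) \<longrightarrow>
               H n (x(i := a)) = a)"
  then obtain a :: real where absorbing: "\<forall>i<n. \<forall>x::nat \<Rightarrow> real. (\<forall>j<n. x j \<in> {0..1}) \<longrightarrow>
               H n (x(i := a)) = a"
    by blast
  define b :: real where "b = (if a = 0 then 1 else 0)"
  have "b \<in> {0..1}" "b \<noteq> a"
    by (auto simp: b_def)
  then have "H n ((\<lambda>_. b)(0 := a)) = a"
    using absorbing[rule_format, of 0 "\<lambda>_. b"] assms by simp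
  moreover have "f_weight n ((\<lambda>_. b)(0 := a)) 0 < 1"
    using f_weight_lt_one[OF assms] \<open>b \<noteq> a\<close> by simp
  ultimately show False
    using H_fun_upd_const[of n b a] assms \<open>b \<noteq> a\<close> by simp
qed

end
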